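(* Under the setting below, every nonzero element $\bar x$ of $\mathcal C$ satisfies $\sum_{i=1}^r\bar x_i=\frac12(n-1)$. Equivalently, after subtracting a constant from the superpotential $u$ (which removes $0$ from $\mathcal C$ and leaves a superpotential), $\mathcal C$ lies in the hyperplane $\{\bar x:\sum_i\bar x_i=\frac12(n-1)\}$.
   Context: Let $G$ be a compact Lie group, $K\subset G$ a closed subgroup with $G/K$ connected and almost effective, and $\mathfrak p=\mathfrak p_1\oplus\cdots\oplus\mathfrak p_r$ ($r\ge2$) an $\mathrm{Ad}(K)$-invariant decomposition of the isotropy representation into pairwise inequivalent $\mathbb R$-irreducible summands; $d_i=\dim\mathfrak p_i$, $d=(d_1,\dots,d_r)$, $n=\sum d_i$. For $q\in\mathbb R^r$ the $G$-invariant metric equal to $e^{q_i}Q$ on $\mathfrak p_i$ ($Q$ fixed bi-invariant) has scalar curvature $S(q)=\sum_{w\in\mathcal W}A_we^{w\cdot q}$ with $\mathcal W\subset\mathbb Z^r$ finite and constants $A_w\ne0$; each $w\in\mathcal W$ is of type I (one entry $-1$, rest $0$), type II (one entry $1$, two entries $-1$, rest $0$) or type III (one entry $1$, one entry $-2$, rest $0$), and $A_w>0$ for type I, $A_w<0$ for types II, III. Assume $\dim\operatorname{conv}(\mathcal W)=r-1$. $J$ is the symmetric bilinear form on $\mathbb R^r$ with $J(p,p)=\frac1{n-1}(\sum p_i)^2-\sum p_i^2/d_i$. Assume $u(q)=\sum_{\bar c\in\mathcal C}F_{\bar c}e^{\bar c\cdot q}$ ($\mathcal C\subset\mathbb R^r$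 finite, $F_{\bar c}\neq0$) is a superpotential, i.e. $J(\nabla u,\nabla u)=e^{d\cdot q}S(q)$; equivalently, for every $\xi\in\mathbb R^r$, $\sum_{(\bar a,\bar c)\in\mathcal C\times\mathcal C,\ \bar a+\bar c=\xi}J(\bar a,\bar c)F_{\bar a}F_{\bar c}$ equals $A_w$ if $\xi=d+w$ with $w\in\mathcal W$ and $0$ otherwise. *)

theory Defs
  imports "HOL-Analysis.Analysis"
begin

text \<open>Vectors in R^r are modelled as real^'r; the index type 'r has r = CARD('r) elements.
  e_i is axis i 1.\<close>

definition typeI :: "real^'r \<Rightarrow> bool" where
  "typeI w \<longleftrightarrow> (\<exists>i. w = - axis i 1)"

definition typeII :: "real^'r \<Rightarrow> bool" where
  "typeII w \<longleftrightarrow> (\<exists>i j k. i \<noteq> j \<and> i \<noteq> k \<and> j \<noteq> k \<and>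
      w = axis i 1 - axis j 1 - axis k 1)"

definition typeIII :: "real^'r \<Rightarrow> bool" where
  "typeIII w \<longleftrightarrow> (\<exists>i j. i \<noteq> j \<and> w = axis i 1 - 2 *\<^sub>R axis j 1)"

definition dvec :: "('r::finite \<Rightarrow> nat) \<Rightarrow> real^'r" where
  "dvec d = (\<chi> i. real (d i))"

definition ntot :: "('r::finite \<Rightarrow> nat) \<Rightarrow> nat" where
  "ntot d = (\<Sum>i\<in>UNIV. d i)"

definition Jform :: "('r::finite \<Rightarrow> nat) \<Rightarrow> real^'r \<Rightarrow> real^'r \<Rightarrow> real" where
  "Jform d p p' = (\<Sum>i\<in>UNIV. p $ i) * (\<Sum>i\<in>UNIV. p' $ i) / (real (ntot d) - 1)
                 - (\<Sum>i\<in>UNIV. p $ i * p' $ i / real (d i))"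

definition scal :: "(real^'r) set \<Rightarrow> (real^'r \<Rightarrow> real) \<Rightarrow> real^'r \<Rightarrow> real" where
  "scal W A q = (\<Sum>w\<in>W. A w * exp (w \<bullet> q))"

definition expsum :: "(real^'r) set \<Rightarrow> (real^'r \<Rightarrow> real) \<Rightarrow> real^'r \<Rightarrow> real" where
  "expsum C F q = (\<Sum>c\<in>C. F c * exp (c \<bullet> q))"

definition superpotential ::
  "('r::finite \<Rightarrow> nat) \<Rightarrow> (real^'r) set \<Rightarrow> (real^'r \<Rightarrow> real) \<Rightarrow> (real^'r \<Rightarrow> real) \<Rightarrow> bool" where
  "superpotential d W A u \<longleftrightarrow>
     (\<forall>q. \<exists>g. (u has_derivative (\<lambda>h. g \<bullet> h)) (at q) \<and>
          Jform d g g = exp (dvec d \<bullet> q) * scal W A q)"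

end

theory Submission
  imports Defs
begin

text \<open>Comparing coefficients of \<open>exp (\<xi> \<bullet> q)\<close> turns the superpotential equation into
  \<open>Jcoeff \<xi> = A (\<xi> - d)\<close>, where \<open>Jcoeff \<xi>\<close> collects \<open>J(a,b) F a F b\<close> over all \<open>a + b = \<xi>\<close>
  in \<open>C\<close>; every \<open>d + w\<close> has coordinate sum \<open>N = n - 1\<close>, so \<open>Jcoeff\<close> lives on that hyperplane.
  Since \<open>J\<close> is negative definite on coordinate sum zero, an element \<open>p\<close> of \<open>C - {0}\<close> of maximal
  coordinate sum above \<open>N/2\<close> is the only way to write suitable \<open>\<xi>\<close> as \<open>p + c\<close>; this forces
  \<open>J(p,p) = 0\<close>, \<open>p\<close> to be the unique maximiser and \<open>J(p,c) = 0\<close> for every \<open>c\<close> of coordinate sum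
  above \<open>N - \<Sigma>p\<close>. Symmetrically for a minimiser \<open>q\<close>. If some coordinate sum differs from
  \<open>N/2\<close>, both exist, \<open>\<Sigma>p + \<Sigma>q = N\<close>, and \<open>p - q\<close> is \<open>J\<close>-orthogonal to every \<open>d + w\<close>. As \<open>W\<close>
  has full affine dimension inside its hyperplane, the \<open>d + w\<close> span, so \<open>p = q\<close>: a contradiction.\<close>

definition coord_sum :: "real^'n::finite \<Rightarrow> real" where
  "coord_sum x = (\<Sum>i\<in>UNIV. x $ i)"

lemma coord_sum_add [simp]: "coord_sum (x + y) = coord_sum x + coord_sum y"
  by (simp add: coord_sum_def sum.distrib)

lemma coord_sum_diff [simp]: "coord_sum (x - y) = coord_sum x - coord_sum y"
  by (simp add: coord_sum_def sum_subtractf)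

lemma coord_sum_minus [simp]: "coord_sum (- x) = - coord_sum x"
  by (simp add: coord_sum_def sum_negf)

lemma coord_sum_scaleR [simp]: "coord_sum (c *\<^sub>R x) = c * coord_sum x"
  by (simp add: coord_sum_def sum_distrib_left)

lemma coord_sum_axis [simp]: "coord_sum (axis i (1::real)) = 1"
  by (simp add: coord_sum_def axis_def)

lemma coord_sum_eq_inner: "coord_sum x = (\<chi> i. 1) \<bullet> x"
  by (simp add: coord_sum_def inner_vec_def)

lemma coord_sum_dvec: "coord_sum (dvec d) = real (ntot d)"
  by (simp add: coord_sum_def dvec_def ntot_def)

lemma coord_sum_root:
  assumes "typeI w \<or> typeII w \<or> typeIII w"
  shows "coord_sum w = -1"
  using assms unfolding typeI_def typeII_def typeIII_def by auto

lemma card_le_ntot: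
  fixes d :: "'r::finite \<Rightarrow> nat"
  assumes "\<And>i. d i \<ge> 1"
  shows "CARD('r) \<le> ntot d"
  using sum_mono[of "UNIV :: 'r set" "\<lambda>_. 1" d] assms by (simp add: ntot_def)


lemma Jform_coord_sum:
  "Jform d p p' = coord_sum p * coord_sum p' / (real (ntot d) - 1)
                  - (\<Sum>i\<in>UNIV. p $ i * p' $ i / real (d i))"
  by (simp add: Jform_def coord_sum_def)

lemma Jform_sym: "Jform d x y = Jform d y x"
  by (simp add: Jform_def mult.commute)

lemma bilinear_Jform: "bilinear (Jform d)"
  unfolding bilinear_def Jform_coord_sum
  by (auto intro!: linearI simp: algebra_simps add_divide_distrib sum.distrib sum_distrib_left)

lemmas Jform_add_left = bilinear_ladd[OF bilinear_Jform]
lemmas Jform_add_right = bilinear_radd[OF bilinear_Jform]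
lemmas Jform_diff_left = bilinear_lsub[OF bilinear_Jform]
lemmas Jform_minus_left = bilinear_lneg[OF bilinear_Jform]
lemmas Jform_minus_right = bilinear_rneg[OF bilinear_Jform]

lemma Jform_neg_definite:
  assumes "\<And>i. d i \<ge> 1" and "coord_sum x = 0" and "x \<noteq> 0"
  shows "Jform d x x < 0"
proof -
  obtain j where j: "x $ j \<noteq> 0"
    using \<open>x \<noteq> 0\<close> by (metis vec_eq_iff zero_index)
  have "0 < (\<Sum>i\<in>UNIV. x $ i * x $ i / real (d i))"
  proof (rule sum_pos2[where i = j])
    have "0 < x $ j * x $ j"
      using j by (metis not_real_square_gt_zero)
    then show "0 < x $ j * x $ j / real (d j)"
      using assms(1)[of j] by (intro divide_pos_pos) auto
  qed auto
  then show ?thesis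
    by (simp add: Jform_coord_sum assms(2))
qed

lemma Jform_strict_midpoint:
  assumes "\<And>i. d i \<ge> 1" and "coord_sum a = coord_sum b" and "a \<noteq> b"
  shows "Jform d a a + Jform d b b < 2 * Jform d a b"
proof -
  have "Jform d (a - b) (a - b) < 0"
    using Jform_neg_definite[of d "a - b"] assms by simp
  then show ?thesis
    by (simp add: Jform_diff_left bilinear_rsub[OF bilinear_Jform] Jform_sym[of d b a])
qed

lemma Jform_add_add: "Jform d (a + b) (a + b) = Jform d a a + 2 * Jform d a b + Jform d b b"
  by (simp add: Jform_add_left Jform_add_right Jform_sym[of d b a])


subsection \<open>The shifted roots span\<close>

definition Jdual :: "('r::finite \<Rightarrow> nat) \<Rightarrow> real^'r \<Rightarrow> real^'r" where
  "Jdual d z = (\<chi> i. coord_sum z / (real (ntot d) - 1) - z $ i / real (d i))"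

lemma Jform_eq_inner_Jdual: "Jform d z x = Jdual d z \<bullet> x"
proof -
  have "Jdual d z \<bullet> x = (\<Sum>i\<in>UNIV. coord_sum z / (real (ntot d) - 1) * x $ i - z $ i * x $ i / real (d i))"
    by (simp add: Jdual_def inner_vec_def algebra_simps)
  also have "\<dots> = Jform d z x"
    by (simp add: Jform_coord_sum sum_subtractf sum_distrib_left sum_divide_distrib coord_sum_def[of x])
  finally show ?thesis ..
qed

lemma Jdual_eq_0_imp_eq_0:
  assumes d: "\<And>i. d i \<ge> 1" and N: "real (ntot d) \<noteq> 1" and "Jdual d z = 0"
  shows "z = 0"
proof -
  define N where "N = real (ntot d) - 1"
  have z: "z $ i = real (d i) * coord_sum z / N" for i
  proof -
    have "Jdual d z $ i = 0"
      using \<open>Jdual d z = 0\<close> by simp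
    then have "coord_sum z / N = z $ i / real (d i)"
      by (simp add: Jdual_def N_def)
    moreover have "real (d i) \<noteq> 0" "N \<noteq> 0"
      using d[of i] N by (auto simp: N_def)
    ultimately show ?thesis
      by (simp add: field_simps)
  qed
  have "coord_sum z = (\<Sum>i\<in>UNIV. real (d i)) * coord_sum z / N"
    by (subst coord_sum_def) (simp add: z sum_distrib_right sum_divide_distrib)
  also have "(\<Sum>i\<in>UNIV. real (d i)) = N + 1"
    by (simp add: N_def ntot_def)
  finally have "coord_sum z = 0"
    using N by (simp add: N_def field_simps)
  then show "z = 0"
    using z by (simp add: vec_eq_iff)
qed

lemma parallel_if_inner_const_on_hyperplane:
  fixes a y :: "'a::euclidean_space"
  assumes "a \<noteq> 0" and W: "W \<subseteq> {x. a \<bullet> x = b}" and dim: "aff_dim W = int DIM('a) - 1"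
    and const: "\<And>w. w \<in> W \<Longrightarrow> y \<bullet> w = c"
  shows "\<exists>t. y = t *\<^sub>R a"
proof -
  define H where "H = {x. a \<bullet> x = b}"
  have dim_H: "aff_dim H = int DIM('a) - 1"
    using \<open>a \<noteq> 0\<close> by (simp add: H_def)
  have H_sub: "H \<subseteq> {x. y \<bullet> x = c}"
  proof (rule ccontr)
    assume "\<not> H \<subseteq> {x. y \<bullet> x = c}"
    then have "aff_dim (H \<inter> {x. y \<bullet> x = c}) \<le> aff_dim H - 1"
      using aff_dim_affine_Int_hyperplane[of H y c] affine_hyperplane[of a b] dim_H DIM_positive
      by (auto simp: H_def split: if_splits)
    moreover have "aff_dim W \<le> aff_dim (H \<inter> {x. y \<bullet> x = c})"
      using W const by (intro aff_dim_subset) (auto simp: H_def)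
    ultimately show False
      using dim dim_H by simp
  qed
  \<comment> \<open>\<open>y\<close> kills \<open>a\<^sup>\<perp>\<close>, the direction space of \<open>H\<close>, so its component orthogonal to \<open>a\<close> vanishes\<close>
  define x\<^sub>0 where "x\<^sub>0 = (b / (a \<bullet> a)) *\<^sub>R a"
  define u where "u = y - ((y \<bullet> a) / (a \<bullet> a)) *\<^sub>R a"
  have "a \<bullet> u = 0"
    using \<open>a \<noteq> 0\<close> by (simp add: u_def inner_diff_right inner_commute)
  then have "x\<^sub>0 \<in> H" "x\<^sub>0 + u \<in> H"
    using \<open>a \<noteq> 0\<close> by (simp_all add: H_def x\<^sub>0_def inner_add_right)
  then have "y \<bullet> x\<^sub>0 = c" "y \<bullet> (x\<^sub>0 + u) = c"
    using H_sub by auto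
  then have "y \<bullet> u = 0"
    by (simp add: inner_add_right)
  then have "u \<bullet> u = 0"
    using \<open>a \<bullet> u = 0\<close> by (simp add: u_def inner_diff_left inner_commute[of a u])
  then show ?thesis
    by (metis inner_eq_zero_iff u_def eq_iff_diff_eq_0)
qed

lemma eq_0_if_Jform_orthogonal_to_shifted_roots:
  fixes d :: "'r::finite \<Rightarrow> nat" and z :: "real^'r"
  assumes r2: "CARD('r) \<ge> 2" and d: "\<And>i. d i \<ge> 1"
    and roots: "\<And>w. w \<in> W \<Longrightarrow> typeI w \<or> typeII w \<or> typeIII w"
    and dim: "aff_dim (convex hull W) = int CARD('r) - 1"
    and orth: "\<And>w. w \<in> W \<Longrightarrow> Jform d z (dvec d + w) = 0"
  shows "z = 0"
proof -
  define N where "N = real (ntot d) - 1"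
  have "N > 0"
    using card_le_ntot[of d] d r2 by (simp add: N_def)
  define y where "y = Jdual d z"
  have y_orth: "y \<bullet> (dvec d + w) = 0" if "w \<in> W" for w
    using orth[OF that] by (simp add: y_def Jform_eq_inner_Jdual)
  obtain t where t: "y = t *\<^sub>R (\<chi> i. 1)"
  proof (rule exE[OF parallel_if_inner_const_on_hyperplane])
    show "(\<chi> i. 1) \<noteq> (0 :: real^'r)"
      by (simp add: vec_eq_iff)
    show "W \<subseteq> {x. (\<chi> i. 1) \<bullet> x = -1}"
      using coord_sum_root[OF roots] by (auto simp: coord_sum_eq_inner[symmetric])
    show "aff_dim W = int DIM(real^'r) - 1"
      using dim by (simp add: aff_dim_convex_hull)
    show "y \<bullet> w = - (y \<bullet> dvec d)" if "w \<in> W" for w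
      using y_orth[OF that] by (simp add: inner_add_right)
  qed
  obtain w where "w \<in> W"
    using dim r2 by fastforce
  then have "t * N = 0"
    using y_orth coord_sum_root[OF roots]
    by (simp add: t coord_sum_eq_inner[symmetric] coord_sum_dvec N_def)
  then have "Jdual d z = 0"
    using \<open>N > 0\<close> t by (simp add: y_def)
  then show "z = 0"
    using Jdual_eq_0_imp_eq_0[of d z] d \<open>N > 0\<close> by (simp add: N_def)
qed


subsection \<open>Linear independence of exponentials\<close>

lemma exp_sum_eq_0_imp_coeffs_eq_0:
  fixes L :: "real set"
  assumes "finite L" and "\<forall>t. (\<Sum>a\<in>L. G a * exp (a * t)) = 0"
  shows "\<forall>a\<in>L. G a = 0"
  using assms
proof (induction L rule: finite_linorder_max_induct)
  case empty
  then show ?case by simp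
next
  case (insert b L)
  have "b \<notin> L"
    using insert.hyps(2) by auto
  \<comment> \<open>divide by \<open>exp (b * t)\<close> and let \<open>t \<rightarrow> \<infinity>\<close>: only the top exponent survives\<close>
  have eq: "G b + (\<Sum>a\<in>L. G a * exp ((a - b) * t)) = 0" for t
  proof -
    have "G b + (\<Sum>a\<in>L. G a * exp ((a - b) * t))
          = exp (- (b * t)) * (\<Sum>a\<in>insert b L. G a * exp (a * t))"
      using \<open>b \<notin> L\<close> insert.hyps(1)
      by (simp add: sum_distrib_left algebra_simps exp_add[symmetric] exp_minus_inverse)
    then show ?thesis
      using insert.prems by simp
  qed
  have "((\<lambda>t. G b + (\<Sum>a\<in>L. G a * exp ((a - b) * t))) \<longlongrightarrow> G b + (\<Sum>a\<in>L. G a * 0)) at_top"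
  proof (intro tendsto_intros)
    fix a assume "a \<in> L"
    then have "filterlim (\<lambda>t. (a - b) * t) at_bot at_top"
      using insert.hyps(2) by (intro filterlim_tendsto_neg_mult_at_bot[where c = "a - b"])
        (auto intro: filterlim_ident)
    then show "((\<lambda>t. exp ((a - b) * t)) \<longlongrightarrow> 0) at_top"
      by (rule filterlim_compose[OF exp_at_bot])
  qed
  then have "G b = 0"
    using eq by (simp add: tendsto_const_iff)
  then have "\<forall>t. (\<Sum>a\<in>L. G a * exp (a * t)) = 0"
    using insert.prems \<open>b \<notin> L\<close> insert.hyps(1) by simp
  then show ?case
    using insert.IH \<open>G b = 0\<close> by simp
qed

lemma ex_inj_on_inner:
  fixes X :: "'a::euclidean_space set"
  assumes "finite X"
  shows "\<exists>l. inj_on (\<lambda>x. x \<bullet> l) X"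
proof -
  define T where "T = (\<lambda>(x, y). {l. (x - y) \<bullet> l = 0}) ` (X \<times> X - Id)"
  have "finite T"
    using assms by (simp add: T_def)
  then have "negligible (\<Union>T)"
    by (rule negligible_Union) (auto simp: T_def intro: negligible_hyperplane)
  moreover have "\<not> negligible (UNIV :: 'a set)"
    by (rule open_not_negligible) auto
  ultimately obtain l where l: "l \<notin> \<Union>T"
    by (metis UNIV_I negligible_subset subsetI)
  have "inj_on (\<lambda>x. x \<bullet> l) X"
  proof (rule inj_onI)
    fix x y assume "x \<in> X" "y \<in> X" "x \<bullet> l = y \<bullet> l"
    then show "x = y"
      using l by (auto simp: T_def inner_diff_left)
  qed
  then show ?thesis ..
qed

lemma exp_inner_sum_eq_0_imp_coeffs_eq_0:
  fixes X :: "'a::euclidean_space set"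
  assumes "finite X" and "\<forall>q. (\<Sum>x\<in>X. G x * exp (x \<bullet> q)) = 0"
  shows "\<forall>x\<in>X. G x = 0"
proof -
  obtain l where "inj_on (\<lambda>x. x \<bullet> l) X"
    using ex_inj_on_inner[OF assms(1)] ..
  define f where "f = (\<lambda>x. x \<bullet> l)"
  have inj: "inj_on f X"
    using \<open>inj_on (\<lambda>x. x \<bullet> l) X\<close> by (simp add: f_def)
  define H where "H a = G (the_inv_into X f a)" for a
  have "(\<Sum>a\<in>f ` X. H a * exp (a * t)) = 0" for t
  proof -
    have "(\<Sum>a\<in>f ` X. H a * exp (a * t)) = (\<Sum>x\<in>X. H (f x) * exp (f x * t))"
      using inj by (simp add: sum.reindex)
    also have "\<dots> = (\<Sum>x\<in>X. G x * exp (f x * t))"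
      using the_inv_into_f_f[OF inj] by (simp add: H_def)
    also have "\<dots> = (\<Sum>x\<in>X. G x * exp (x \<bullet> (t *\<^sub>R l)))"
      by (simp add: f_def mult.commute)
    also have "\<dots> = 0"
      using assms(2) by blast
    finally show ?thesis .
  qed
  then have "\<forall>a\<in>f ` X. H a = 0"
    using exp_sum_eq_0_imp_coeffs_eq_0 assms(1) by blast
  then show ?thesis
    using the_inv_into_f_f[OF inj] by (auto simp: H_def)
qed


subsection \<open>Coefficient extraction from the superpotential equation\<close>

definition sum_pairs :: "'a::plus set \<Rightarrow> 'a \<Rightarrow> ('a \<times> 'a) set" where
  "sum_pairs S \<xi> = {x \<in> S \<times> S. fst x + snd x = \<xi>}"

text \<open>The coefficient of \<open>exp (\<xi> \<bullet> q)\<close> in \<open>Jform d (\<nabla>u) (\<nabla>u)\<close> for \<open>u = expsum S F\<close>.\<close>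

definition Jcoeff ::
  "('r::finite \<Rightarrow> nat) \<Rightarrow> (real^'r) set \<Rightarrow> (real^'r \<Rightarrow> real) \<Rightarrow> real^'r \<Rightarrow> real" where
  "Jcoeff d S F \<xi> = (\<Sum>x\<in>sum_pairs S \<xi>. Jform d (fst x) (snd x) * F (fst x) * F (snd x))"

lemma Jcoeff_remove_zero:
  assumes "finite S"
  shows "Jcoeff d (S - {0}) F \<xi> = Jcoeff d S F \<xi>"
  unfolding Jcoeff_def sum_pairs_def
  using assms by (intro sum.mono_neutral_left)
    (auto simp: bilinear_lzero[OF bilinear_Jform] bilinear_rzero[OF bilinear_Jform])

lemma has_derivative_expsum:
  assumes "finite C"
  shows "(expsum C F has_derivative (\<lambda>h. (\<Sum>c\<in>C. (F c * exp (c \<bullet> q)) *\<^sub>R c) \<bullet> h)) (at q)"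
proof -
  have "((\<lambda>q. \<Sum>c\<in>C. F c * exp (c \<bullet> q)) has_derivative
         (\<lambda>h. \<Sum>c\<in>C. F c * (exp (c \<bullet> q) * (c \<bullet> h)))) (at q)"
    by (auto intro!: derivative_eq_intros simp: mult.commute)
  then show ?thesis
    by (simp add: expsum_def[abs_def] inner_sum_left mult.assoc)
qed

lemma superpotential_expsum_eq:
  assumes "finite C" and "superpotential d W A (expsum C F)"
  shows "(\<Sum>x\<in>C \<times> C. Jform d (fst x) (snd x) * F (fst x) * F (snd x) * exp ((fst x + snd x) \<bullet> q))
         = (\<Sum>w\<in>W. A w * exp ((dvec d + w) \<bullet> q))"
proof -
  define G where "G = (\<Sum>c\<in>C. (F c * exp (c \<bullet> q)) *\<^sub>R c)"
  obtain g where g: "(expsum C F has_derivative (\<lambda>h. g \<bullet> h)) (at q)"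
    and J: "Jform d g g = exp (dvec d \<bullet> q) * scal W A q"
    using assms(2) unfolding superpotential_def by blast
  have "(\<lambda>h. g \<bullet> h) = (\<lambda>h. G \<bullet> h)"
    using has_derivative_unique[OF g has_derivative_expsum[OF assms(1)]] by (simp add: G_def)
  then have "g = G"
    by (metis euclidean_eqI)
  have "Jform d G G
        = (\<Sum>x\<in>C \<times> C. Jform d (fst x) (snd x) * F (fst x) * F (snd x) * exp ((fst x + snd x) \<bullet> q))"
    unfolding G_def bilinear_sum[OF bilinear_Jform]
    by (intro sum.cong) (auto simp: bilinear_lmul[OF bilinear_Jform] bilinear_rmul[OF bilinear_Jform]
      inner_add_left exp_add)
  moreover have "exp (dvec d \<bullet> q) * scal W A q = (\<Sum>w\<in>W. A w * exp ((dvec d + w) \<bullet> q))"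
    by (simp add: scal_def sum_distrib_left inner_add_left exp_add algebra_simps)
  ultimately show ?thesis
    using J \<open>g = G\<close> by simp
qed

lemma superpotential_Jcoeff:
  assumes "finite C" and "finite W" and "superpotential d W A (expsum C F)"
  shows "Jcoeff d C F \<xi> = (if \<xi> - dvec d \<in> W then A (\<xi> - dvec d) else 0)"
proof -
  define R where "R \<xi> = (if \<xi> - dvec d \<in> W then A (\<xi> - dvec d) else 0)" for \<xi>
  define s :: "(real^'a) \<times> (real^'a) \<Rightarrow> real^'a" where "s x = fst x + snd x" for x
  define X where "X = s ` (C \<times> C) \<union> (\<lambda>w. dvec d + w) ` W"
  have "finite X"
    using assms(1,2) by (simp add: X_def)
  have R_0: "R \<xi> = 0" if "\<xi> \<notin> (\<lambda>w. dvec d + w) ` W" for \<xi>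
  proof -
    have "\<xi> - dvec d \<notin> W"
      using that by (metis add.commute diff_add_cancel image_eqI)
    then show ?thesis
      by (simp add: R_def)
  qed
  have "\<forall>q. (\<Sum>\<xi>\<in>X. (Jcoeff d C F \<xi> - R \<xi>) * exp (\<xi> \<bullet> q)) = 0"
  proof
    fix q
    have "(\<Sum>\<xi>\<in>X. Jcoeff d C F \<xi> * exp (\<xi> \<bullet> q))
          = (\<Sum>\<xi>\<in>X. \<Sum>x\<in>{x. x \<in> C \<times> C \<and> s x = \<xi>}.
               Jform d (fst x) (snd x) * F (fst x) * F (snd x) * exp (s x \<bullet> q))"
      by (auto simp: Jcoeff_def sum_pairs_def s_def sum_distrib_right intro!: sum.cong)
    also have "\<dots> = (\<Sum>x\<in>C \<times> C. Jform d (fst x) (snd x) * F (fst x) * F (snd x) * exp (s x \<bullet> q))"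
      using assms(1) \<open>finite X\<close> by (intro sum.group) (auto simp: X_def)
    also have "\<dots> = (\<Sum>w\<in>W. A w * exp ((dvec d + w) \<bullet> q))"
      unfolding s_def by (rule superpotential_expsum_eq[OF assms(1,3)])
    also have "\<dots> = (\<Sum>\<xi>\<in>(\<lambda>w. dvec d + w) ` W. R \<xi> * exp (\<xi> \<bullet> q))"
      by (subst sum.reindex) (auto simp: inj_on_def R_def)
    also have "\<dots> = (\<Sum>\<xi>\<in>X. R \<xi> * exp (\<xi> \<bullet> q))"
      using \<open>finite X\<close> R_0 by (intro sum.mono_neutral_left) (auto simp: X_def)
    finally show "(\<Sum>\<xi>\<in>X. (Jcoeff d C F \<xi> - R \<xi>) * exp (\<xi> \<bullet> q)) = 0"
      by (simp add: left_diff_distrib sum_subtractf)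
  qed
  then have "\<forall>\<xi>\<in>X. Jcoeff d C F \<xi> = R \<xi>"
    using exp_inner_sum_eq_0_imp_coeffs_eq_0[OF \<open>finite X\<close>, of "\<lambda>\<xi>. Jcoeff d C F \<xi> - R \<xi>"]
    by simp
  moreover have "Jcoeff d C F \<xi> = 0" if "\<xi> \<notin> X" for \<xi>
    using that by (auto simp: Jcoeff_def sum_pairs_def X_def s_def intro!: sum.neutral)
  moreover have "R \<xi> = 0" if "\<xi> \<notin> X" for \<xi>
    using that R_0 by (simp add: X_def)
  ultimately show ?thesis
    by (metis R_def)
qed

subsection \<open>Extremal exponents\<close>

lemma finite_obtains_arg_min:
  fixes f :: "'a \<Rightarrow> 'b::linorder"
  assumes "finite A" and "A \<noteq> {}"
  obtains x where "x \<in> A" and "\<And>y. y \<in> A \<Longrightarrow> f x \<le> f y"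
  using ex_is_arg_min_if_finite[OF assms, of f] by (auto simp: is_arg_min_linorder)

lemma Jcoeff_nonzero_imp_sum_pair:
  assumes "Jcoeff d S F \<xi> \<noteq> 0"
  obtains a b where "a \<in> S" and "b \<in> S" and "a + b = \<xi>"
proof -
  have "sum_pairs S \<xi> \<noteq> {}"
    using assms by (auto simp: Jcoeff_def)
  then show thesis
    using that by (auto simp: sum_pairs_def)
qed

lemma Jcoeff_if_sum_pairs_unique:
  assumes "p \<in> S" and "c \<in> S"
    and "\<And>a b. a \<in> S \<Longrightarrow> b \<in> S \<Longrightarrow> a + b = p + c \<Longrightarrow> (a = p \<and> b = c) \<or> (a = c \<and> b = p)"
  shows "Jcoeff d S F (p + c) = (if p = c then 1 else 2) * Jform d p c * F p * F c"
proof -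
  have "sum_pairs S (p + c) = {(p, c), (c, p)}"
  proof (intro equalityI subsetI)
    fix x assume "x \<in> sum_pairs S (p + c)"
    then show "x \<in> {(p, c), (c, p)}"
      using assms(3)[of "fst x" "snd x"] by (auto simp: sum_pairs_def prod_eq_iff)
  next
    fix x assume "x \<in> {(p, c), (c, p)}"
    then show "x \<in> sum_pairs S (p + c)"
      using assms(1,2) by (auto simp: sum_pairs_def add.commute)
  qed
  then show ?thesis
    by (cases "p = c") (auto simp: Jcoeff_def Jform_sym[of d c p])
qed

lemma Jcoeff_uminus: "Jcoeff d (uminus ` S) (\<lambda>c. F (- c)) \<xi> = Jcoeff d S F (- \<xi>)"
proof -
  have neg_sum: "- a - b = c \<longleftrightarrow> a + b = - c" for a b c :: "real^'a"
    using minus_equation_iff[of "a + b" c] by (simp add: eq_commute[of "- c"])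
  show ?thesis
    unfolding Jcoeff_def sum_pairs_def
    by (rule sum.reindex_bij_witness[where i = "\<lambda>x. (- fst x, - snd x)" and j = "\<lambda>x. (- fst x, - snd x)"])
      (auto simp: Jform_minus_left Jform_minus_right neg_sum)
qed

text \<open>In the application \<open>S = C - {0}\<close> and \<open>N = n - 1\<close>.\<close>

locale Jcoeff_on_hyperplane =
  fixes d :: "'r::finite \<Rightarrow> nat" and S :: "(real^'r) set" and F :: "real^'r \<Rightarrow> real" and N :: real
  assumes d_pos: "\<And>i. d i \<ge> 1"
    and finite_S: "finite S"
    and F_nonzero: "\<And>c. c \<in> S \<Longrightarrow> F c \<noteq> 0"
    and Jcoeff_off_hyperplane: "\<And>\<xi>. coord_sum \<xi> \<noteq> N \<Longrightarrow> Jcoeff d S F \<xi> = 0"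
begin

lemma Jform_eq_0_if_sum_pairs_unique:
  assumes "p \<in> S" and "c \<in> S" and "coord_sum (p + c) \<noteq> N"
    and "\<And>a b. a \<in> S \<Longrightarrow> b \<in> S \<Longrightarrow> a + b = p + c \<Longrightarrow> (a = p \<and> b = c) \<or> (a = c \<and> b = p)"
  shows "Jform d p c = 0"
proof -
  have "(if p = c then 1 else 2) * Jform d p c * F p * F c = 0"
    using Jcoeff_if_sum_pairs_unique[of p S c] Jcoeff_off_hyperplane assms by metis
  then show ?thesis
    using F_nonzero assms(1,2) by (simp split: if_splits)
qed

lemma coord_sum_eq_if_sum_eq_top:
  assumes "a \<in> S" and "b \<in> S" and "a + b = p + c"
    and "coord_sum c = coord_sum p" and top: "\<And>c. c \<in> S \<Longrightarrow> coord_sum c \<le> coord_sum p"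
  shows "coord_sum a = coord_sum p" and "coord_sum b = coord_sum p"
  using arg_cong[OF assms(3), of coord_sum] assms(4) top[OF assms(1)] top[OF assms(2)] by simp_all

lemma Jform_self_eq_0_at_top:
  assumes p: "p \<in> S" and top: "\<And>c. c \<in> S \<Longrightarrow> coord_sum c \<le> coord_sum p"
    and above: "coord_sum p > N / 2"
    and min: "\<And>c. c \<in> S \<Longrightarrow> coord_sum c = coord_sum p \<Longrightarrow> Jform d p p \<le> Jform d c c"
  shows "Jform d p p = 0"
proof (rule Jform_eq_0_if_sum_pairs_unique[OF p p])
  show "coord_sum (p + p) \<noteq> N"
    using above coord_sum_add[of p p] by linarith
next
  fix a b assume ab: "a \<in> S" "b \<in> S" "a + b = p + p"
  note sums = coord_sum_eq_if_sum_eq_top[OF ab refl top]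
  have "a = b"
  proof (rule ccontr)
    assume "a \<noteq> b"
    then have "Jform d a a + Jform d b b < 2 * Jform d a b"
      using Jform_strict_midpoint[of d, OF d_pos] sums by simp
    moreover have "Jform d a a + 2 * Jform d a b + Jform d b b = 4 * Jform d p p"
      using Jform_add_add[of d a b] Jform_add_add[of d p p] ab(3) by simp
    ultimately show False
      using min[OF ab(1) sums(1)] min[OF ab(2) sums(2)] by linarith
  qed
  with ab(3) show "(a = p \<and> b = p) \<or> (a = p \<and> b = p)"
    by (simp add: vec_eq_iff)
qed

lemma coord_sum_less_at_top:
  assumes p: "p \<in> S" and top: "\<And>c. c \<in> S \<Longrightarrow> coord_sum c \<le> coord_sum p"
    and above: "coord_sum p > N / 2"
    and min: "\<And>c. c \<in> S \<Longrightarrow> coord_sum c = coord_sum p \<Longrightarrow> Jform d p p \<le> Jform d c c"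
    and Jpp: "Jform d p p = 0"
    and "c \<in> S" and "c \<noteq> p"
  shows "coord_sum c < coord_sum p"
proof (rule ccontr)
  assume "\<not> coord_sum c < coord_sum p"
  define T where "T = {c \<in> S. coord_sum c = coord_sum p \<and> c \<noteq> p}"
  have "c \<in> T"
    using \<open>\<not> coord_sum c < coord_sum p\<close> top[of c] assms(6,7) by (auto simp: T_def)
  \<comment> \<open>a rival top element minimising \<open>Jform d p\<close> can only be reached from \<open>p\<close> itself\<close>
  then obtain a where "a \<in> T" and a_min: "\<And>b. b \<in> T \<Longrightarrow> Jform d p a \<le> Jform d p b"
    using finite_obtains_arg_min[of T "Jform d p"] finite_S by (auto simp: T_def)
  then have a: "a \<in> S" "coord_sum a = coord_sum p" "a \<noteq> p"
    by (auto simp: T_def)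
  have pos: "Jform d p a > 0"
    using Jform_strict_midpoint[of d, OF d_pos a(2) a(3)] min[OF a(1,2)] Jpp Jform_sym[of d a p]
    by linarith
  have "Jform d p a = 0"
  proof (rule Jform_eq_0_if_sum_pairs_unique[OF p a(1)])
    show "coord_sum (p + a) \<noteq> N"
      using above a(2) by simp
  next
    fix x y assume xy: "x \<in> S" "y \<in> S" "x + y = p + a"
    note sums = coord_sum_eq_if_sum_eq_top[OF xy a(2) top]
    have "x = p \<or> y = p"
    proof (rule ccontr)
      assume "\<not> (x = p \<or> y = p)"
      then have "Jform d p a \<le> Jform d p x" "Jform d p a \<le> Jform d p y"
        using a_min xy(1,2) sums by (auto simp: T_def)
      moreover have "Jform d p x + Jform d p y = Jform d p a"
        using arg_cong[OF xy(3), of "Jform d p"] Jpp by (simp add: Jform_add_right)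
      ultimately show False
        using pos by linarith
    qed
    then show "(x = p \<and> y = a) \<or> (x = a \<and> y = p)"
      using xy(3) by (metis add.commute add_left_cancel)
  qed
  with pos show False
    by simp
qed

lemma top_Jorthogonal:
  assumes p: "p \<in> S" and strict: "\<And>c. c \<in> S \<Longrightarrow> c \<noteq> p \<Longrightarrow> coord_sum c < coord_sum p"
    and Jpp: "Jform d p p = 0"
  shows "\<forall>c\<in>S. coord_sum c > N - coord_sum p \<longrightarrow> Jform d p c = 0"
proof (rule ccontr)
  define B where "B = {c \<in> S. coord_sum c > N - coord_sum p \<and> Jform d p c \<noteq> 0}"
  assume "\<not> ?thesis"
  then have "B \<noteq> {}"
    by (auto simp: B_def)
  \<comment> \<open>a counterexample of maximal coordinate sum can only be reached from \<open>p\<close> itself\<close>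
  then obtain c where "c \<in> B" and c_max: "\<And>b. b \<in> B \<Longrightarrow> - coord_sum c \<le> - coord_sum b"
    using finite_obtains_arg_min[of B "\<lambda>c. - coord_sum c"] finite_S by (auto simp: B_def)
  then have c: "c \<in> S" "coord_sum c > N - coord_sum p" "Jform d p c \<noteq> 0"
    by (auto simp: B_def)
  have "Jform d p c = 0"
  proof (rule Jform_eq_0_if_sum_pairs_unique[OF p c(1)])
    show "coord_sum (p + c) \<noteq> N"
      using c(2) by simp
  next
    fix x y assume xy: "x \<in> S" "y \<in> S" "x + y = p + c"
    have sum: "coord_sum x + coord_sum y = coord_sum p + coord_sum c"
      using arg_cong[OF xy(3), of coord_sum] by simp
    have "x = p \<or> y = p"
    proof (rule ccontr)
      assume "\<not> (x = p \<or> y = p)"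
      then have "coord_sum x > coord_sum c" "coord_sum y > coord_sum c"
        using strict[OF xy(1)] strict[OF xy(2)] sum by auto
      then have "x \<notin> B" "y \<notin> B"
        using c_max by force+
      then have "Jform d p x = 0" "Jform d p y = 0"
        using xy(1,2) \<open>coord_sum x > coord_sum c\<close> \<open>coord_sum y > coord_sum c\<close> c(2)
        by (auto simp: B_def)
      moreover have "Jform d p x + Jform d p y = Jform d p c"
        using arg_cong[OF xy(3), of "Jform d p"] Jpp by (simp add: Jform_add_right)
      ultimately show False
        using c(3) by simp
    qed
    then show "(x = p \<and> y = c) \<or> (x = c \<and> y = p)"
      using xy(3) by (metis add.commute add_left_cancel)
  qed
  with c(3) show False ..
qed

lemma top_element:
  assumes "\<exists>c\<in>S. coord_sum c > N / 2"
  obtains p where "p \<in> S" and "\<And>c. c \<in> S \<Longrightarrow> c \<noteq> p \<Longrightarrow> coord_sum c < coord_sum p"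
    and "coord_sum p > N / 2" and "Jform d p p = 0"
    and "\<And>c. c \<in> S \<Longrightarrow> coord_sum c > N - coord_sum p \<Longrightarrow> Jform d p c = 0"
proof -
  obtain m where m: "m \<in> S" "\<And>c. c \<in> S \<Longrightarrow> - coord_sum m \<le> - coord_sum c"
    using finite_obtains_arg_min[OF finite_S, of "\<lambda>c. - coord_sum c"] assms by blast
  define T where "T = {c \<in> S. coord_sum c = coord_sum m}"
  obtain p where "p \<in> T" and p_min: "\<And>c. c \<in> T \<Longrightarrow> Jform d p p \<le> Jform d c c"
    using finite_obtains_arg_min[of T "\<lambda>c. Jform d c c"] finite_S m(1) by (auto simp: T_def)
  then have p: "p \<in> S" and top: "\<And>c. c \<in> S \<Longrightarrow> coord_sum c \<le> coord_sum p"
    using m(2) by (auto simp: T_def)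
  have above: "coord_sum p > N / 2"
    using assms top by force
  have min: "\<And>c. c \<in> S \<Longrightarrow> coord_sum c = coord_sum p \<Longrightarrow> Jform d p p \<le> Jform d c c"
    using p_min \<open>p \<in> T\<close> by (auto simp: T_def)
  note Jpp = Jform_self_eq_0_at_top[OF p top above min]
  note strict = coord_sum_less_at_top[OF p top above min Jpp]
  show thesis
    using that[OF p strict above Jpp] top_Jorthogonal[OF p strict Jpp] by blast
qed

lemma bottom_element:
  assumes "\<exists>c\<in>S. coord_sum c < N / 2"
  obtains q where "q \<in> S" and "\<And>c. c \<in> S \<Longrightarrow> c \<noteq> q \<Longrightarrow> coord_sum q < coord_sum c"
    and "coord_sum q < N / 2" and "Jform d q q = 0"
    and "\<And>c. c \<in> S \<Longrightarrow> coord_sum c < N - coord_sum q \<Longrightarrow> Jform d q c = 0"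
proof -
  interpret neg: Jcoeff_on_hyperplane d "uminus ` S" "\<lambda>c. F (- c)" "- N"
  proof unfold_locales
    show "1 \<le> d i" for i
      by (rule d_pos)
  qed (auto simp: finite_S F_nonzero Jcoeff_uminus Jcoeff_off_hyperplane)
  have "\<exists>c\<in>uminus ` S. coord_sum c > - N / 2"
    using assms by force
  then obtain p where p: "p \<in> uminus ` S"
    and strict: "\<And>c. c \<in> uminus ` S \<Longrightarrow> c \<noteq> p \<Longrightarrow> coord_sum c < coord_sum p"
    and above: "coord_sum p > - N / 2" and Jpp: "Jform d p p = 0"
    and orth: "\<And>c. c \<in> uminus ` S \<Longrightarrow> coord_sum c > - N - coord_sum p \<Longrightarrow> Jform d p c = 0"
    by (rule neg.top_element) blast
  show thesis
  proof (rule that[of "- p"])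
    show "- p \<in> S"
      using p by auto
    show "coord_sum (- p) < coord_sum c" if "c \<in> S" "c \<noteq> - p" for c
    proof -
      have "- c \<noteq> p"
        using that(2) by auto
      then show ?thesis
        using strict[of "- c"] that(1) by auto
    qed
    show "coord_sum (- p) < N / 2"
      using above by simp
    show "Jform d (- p) (- p) = 0"
      using Jpp by (simp add: Jform_minus_left Jform_minus_right)
    show "Jform d (- p) c = 0" if "c \<in> S" "coord_sum c < N - coord_sum (- p)" for c
      using orth[of "- c"] that by (auto simp: Jform_minus_left Jform_minus_right)
  qed
qed

end

lemma Jform_top_minus_bottom:
  assumes "x \<in> S" and "y \<in> S" and sum: "coord_sum x + coord_sum y = coord_sum p + coord_sum q"
    and p_top: "\<And>c. c \<in> S \<Longrightarrow> c \<noteq> p \<Longrightarrow> coord_sum c < coord_sum p"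
    and q_bottom: "\<And>c. c \<in> S \<Longrightarrow> c \<noteq> q \<Longrightarrow> coord_sum q < coord_sum c"
    and "Jform d p p = 0" and "Jform d q q = 0"
    and p_orth: "\<And>c. c \<in> S \<Longrightarrow> c \<noteq> q \<Longrightarrow> Jform d p c = 0"
    and q_orth: "\<And>c. c \<in> S \<Longrightarrow> c \<noteq> p \<Longrightarrow> Jform d q c = 0"
  shows "Jform d (p - q) (x + y) = 0"
proof -
  have partner: "b = q" if "a \<in> S" "b \<in> S" "a + b = x + y" "a = p" for a b
  proof (rule ccontr)
    assume "b \<noteq> q"
    with q_bottom \<open>b \<in> S\<close> have "coord_sum q < coord_sum b"
      by blast
    moreover have "coord_sum a + coord_sum b = coord_sum x + coord_sum y"
      using \<open>a + b = x + y\<close> by (metis coord_sum_add)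
    ultimately show False
      using sum \<open>a = p\<close> by simp
  qed
  have partner': "b = p" if "a \<in> S" "b \<in> S" "a + b = x + y" "a = q" for a b
  proof (rule ccontr)
    assume "b \<noteq> p"
    with p_top \<open>b \<in> S\<close> have "coord_sum b < coord_sum p"
      by blast
    moreover have "coord_sum a + coord_sum b = coord_sum x + coord_sum y"
      using \<open>a + b = x + y\<close> by (metis coord_sum_add)
    ultimately show False
      using sum \<open>a = q\<close> by simp
  qed
  consider "x = p" "y = q" | "x = q" "y = p" | "x \<noteq> p" "x \<noteq> q" "y \<noteq> p" "y \<noteq> q"
    using partner[OF assms(1,2) refl] partner[OF assms(2,1) add.commute]
      partner'[OF assms(1,2) refl] partner'[OF assms(2,1) add.commute]
    by blast
  then show ?thesis
    unfolding Jform_diff_left Jform_add_right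
    by cases (simp_all add: assms(1,2,6,7) p_orth q_orth Jform_sym[of d q p])
qed

locale Jcoeff_on_hyperplane_nondegenerate = Jcoeff_on_hyperplane +
  assumes zero_notin_S: "0 \<notin> S"
    and nondegenerate: "\<And>z. (\<And>\<xi>. Jcoeff d S F \<xi> \<noteq> 0 \<Longrightarrow> Jform d z \<xi> = 0) \<Longrightarrow> z = 0"
begin

lemma ex_Jform_nonzero:
  assumes "p \<in> S"
  obtains a where "a \<in> S" and "Jform d p a \<noteq> 0"
proof (rule ccontr)
  assume "\<not> thesis"
  then have orth: "\<And>a. a \<in> S \<Longrightarrow> Jform d p a = 0"
    using that by blast
  have "Jform d p \<xi> = 0" if nonzero: "Jcoeff d S F \<xi> \<noteq> 0" for \<xi>
  proof -
    obtain a b where "a \<in> S" "b \<in> S" "a + b = \<xi>"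
      using Jcoeff_nonzero_imp_sum_pair[OF nonzero] .
    then show ?thesis
      using orth by (auto simp: Jform_add_right)
  qed
  then have "p = 0"
    by (rule nondegenerate)
  with assms zero_notin_S show False
    by simp
qed

lemma ex_below_iff_ex_above: "(\<exists>c\<in>S. coord_sum c < N / 2) \<longleftrightarrow> (\<exists>c\<in>S. coord_sum c > N / 2)"
proof
  assume "\<exists>c\<in>S. coord_sum c > N / 2"
  then obtain p where "p \<in> S" and "\<And>c. c \<in> S \<Longrightarrow> c \<noteq> p \<Longrightarrow> coord_sum c < coord_sum p"
    and "coord_sum p > N / 2" and "Jform d p p = 0"
    and orth: "\<And>c. c \<in> S \<Longrightarrow> coord_sum c > N - coord_sum p \<Longrightarrow> Jform d p c = 0"
    by (rule top_element) blast
  obtain a where "a \<in> S" and "Jform d p a \<noteq> 0"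
    using ex_Jform_nonzero[OF \<open>p \<in> S\<close>] .
  then have "\<not> coord_sum a > N - coord_sum p"
    using orth by blast
  with \<open>coord_sum p > N / 2\<close> have "coord_sum a < N / 2"
    by linarith
  with \<open>a \<in> S\<close> show "\<exists>c\<in>S. coord_sum c < N / 2" ..
next
  assume "\<exists>c\<in>S. coord_sum c < N / 2"
  then obtain q where "q \<in> S" and "\<And>c. c \<in> S \<Longrightarrow> c \<noteq> q \<Longrightarrow> coord_sum q < coord_sum c"
    and "coord_sum q < N / 2" and "Jform d q q = 0"
    and orth: "\<And>c. c \<in> S \<Longrightarrow> coord_sum c < N - coord_sum q \<Longrightarrow> Jform d q c = 0"
    by (rule bottom_element) blast
  obtain b where "b \<in> S" and "Jform d q b \<noteq> 0"
    using ex_Jform_nonzero[OF \<open>q \<in> S\<close>] .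
  then have "\<not> coord_sum b < N - coord_sum q"
    using orth by blast
  with \<open>coord_sum q < N / 2\<close> have "coord_sum b > N / 2"
    by linarith
  with \<open>b \<in> S\<close> show "\<exists>c\<in>S. coord_sum c > N / 2" ..
qed

lemma coord_sum_eq_half:
  assumes "c \<in> S"
  shows "coord_sum c = N / 2"
proof (rule ccontr)
  assume "coord_sum c \<noteq> N / 2"
  then have "(\<exists>c\<in>S. coord_sum c < N / 2) \<or> (\<exists>c\<in>S. coord_sum c > N / 2)"
    using assms linorder_neq_iff by blast
  then have above: "\<exists>c\<in>S. coord_sum c > N / 2" and below: "\<exists>c\<in>S. coord_sum c < N / 2"
    using ex_below_iff_ex_above by blast+
  obtain p where "p \<in> S" and p_top: "\<And>c. c \<in> S \<Longrightarrow> c \<noteq> p \<Longrightarrow> coord_sum c < coord_sum p"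
    and "coord_sum p > N / 2" and "Jform d p p = 0"
    and p_orth: "\<And>c. c \<in> S \<Longrightarrow> coord_sum c > N - coord_sum p \<Longrightarrow> Jform d p c = 0"
    using above by (rule top_element) blast
  obtain q where "q \<in> S" and q_bottom: "\<And>c. c \<in> S \<Longrightarrow> c \<noteq> q \<Longrightarrow> coord_sum q < coord_sum c"
    and "coord_sum q < N / 2" and "Jform d q q = 0"
    and q_orth: "\<And>c. c \<in> S \<Longrightarrow> coord_sum c < N - coord_sum q \<Longrightarrow> Jform d q c = 0"
    using below by (rule bottom_element) blast
  \<comment> \<open>the partners of \<open>p\<close> and \<open>q\<close> squeeze \<open>\<Sigma>p + \<Sigma>q\<close> from both sides\<close>
  obtain a where "a \<in> S" and "Jform d p a \<noteq> 0"
    using ex_Jform_nonzero[OF \<open>p \<in> S\<close>] .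
  obtain b where "b \<in> S" and "Jform d q b \<noteq> 0"
    using ex_Jform_nonzero[OF \<open>q \<in> S\<close>] .
  have "\<not> coord_sum a > N - coord_sum p"
    using p_orth \<open>a \<in> S\<close> \<open>Jform d p a \<noteq> 0\<close> by blast
  moreover have "coord_sum q \<le> coord_sum a"
    using q_bottom[OF \<open>a \<in> S\<close>] by (cases "a = q") auto
  moreover have "\<not> coord_sum b < N - coord_sum q"
    using q_orth \<open>b \<in> S\<close> \<open>Jform d q b \<noteq> 0\<close> by blast
  moreover have "coord_sum b \<le> coord_sum p"
    using p_top[OF \<open>b \<in> S\<close>] by (cases "b = p") auto
  ultimately have N: "coord_sum p + coord_sum q = N"
    by linarith
  have "p - q = 0"
  proof (rule nondegenerate)
    fix \<xi> assume "Jcoeff d S F \<xi> \<noteq> 0"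
    then obtain x y where xy: "x \<in> S" "y \<in> S" "x + y = \<xi>"
      by (rule Jcoeff_nonzero_imp_sum_pair)
    have "coord_sum (x + y) = N"
      using Jcoeff_off_hyperplane \<open>Jcoeff d S F \<xi> \<noteq> 0\<close> xy(3) by blast
    then have "coord_sum x + coord_sum y = coord_sum p + coord_sum q"
      using N by simp
    moreover have "Jform d p c = 0" if "c \<in> S" "c \<noteq> q" for c
    proof -
      have "coord_sum c > N - coord_sum p"
        using q_bottom[OF that] N by linarith
      then show ?thesis
        using p_orth that(1) by blast
    qed
    moreover have "Jform d q c = 0" if "c \<in> S" "c \<noteq> p" for c
    proof -
      have "coord_sum c < N - coord_sum q"
        using p_top[OF that] N by linarith
      then show ?thesis
        using q_orth that(1) by blast
    qed
    ultimately show "Jform d (p - q) \<xi> = 0"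
      unfolding xy(3)[symmetric]
      using Jform_top_minus_bottom[OF xy(1,2) _ p_top q_bottom \<open>Jform d p p = 0\<close> \<open>Jform d q q = 0\<close>]
      by blast
  qed
  with \<open>coord_sum p > N / 2\<close> \<open>coord_sum q < N / 2\<close> show False
    by simp
qed

end

theorem theorem1p5:
  fixes d :: "'r::finite \<Rightarrow> nat"
    and W :: "(real^'r) set" and A :: "real^'r \<Rightarrow> real"
    and C :: "(real^'r) set" and F :: "real^'r \<Rightarrow> real"
  assumes r2: "CARD('r) \<ge> 2"
    and dpos: "\<And>i. d i \<ge> 1"
    and Wfin: "finite W"
    and Wtypes: "\<And>w. w \<in> W \<Longrightarrow> typeI w \<or> typeII w \<or> typeIII w"
    and Anz: "\<And>w. w \<in> W \<Longrightarrow> A w \<noteq> 0"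
    and ApI: "\<And>w. w \<in> W \<Longrightarrow> typeI w \<Longrightarrow> A w > 0"
    and AnII: "\<And>w. w \<in> W \<Longrightarrow> typeII w \<Longrightarrow> A w < 0"
    and AnIII: "\<And>w. w \<in> W \<Longrightarrow> typeIII w \<Longrightarrow> A w < 0"
    and dimW: "aff_dim (convex hull W) = int CARD('r) - 1"
    and Cfin: "finite C"
    and Fnz: "\<And>c. c \<in> C \<Longrightarrow> F c \<noteq> 0"
    and sup: "superpotential d W A (expsum C F)"
  shows "\<forall>c\<in>C. c \<noteq> 0 \<longrightarrow> (\<Sum>i\<in>UNIV. c $ i) = (real (ntot d) - 1) / 2"
proof -
  define N where "N = real (ntot d) - 1"
  have Jcoeff: "Jcoeff d (C - {0}) F \<xi> = (if \<xi> - dvec d \<in> W then A (\<xi> - dvec d) else 0)" for \<xi>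
    using Jcoeff_remove_zero[OF Cfin] superpotential_Jcoeff[OF Cfin Wfin sup] by simp
  have shifted_root: "coord_sum (dvec d + w) = N" if "w \<in> W" for w
    using coord_sum_root[OF Wtypes[OF that]] by (simp add: coord_sum_dvec N_def)
  interpret Jcoeff_on_hyperplane_nondegenerate d "C - {0}" F N
  proof unfold_locales
    show "Jcoeff d (C - {0}) F \<xi> = 0" if "coord_sum \<xi> \<noteq> N" for \<xi>
      using that shifted_root[of "\<xi> - dvec d"] by (auto simp: Jcoeff algebra_simps)
    show "z = 0" if orth: "\<And>\<xi>. Jcoeff d (C - {0}) F \<xi> \<noteq> 0 \<Longrightarrow> Jform d z \<xi> = 0" for z
    proof (rule eq_0_if_Jform_orthogonal_to_shifted_roots[where d = d, OF r2 dpos Wtypes dimW])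
      show "Jform d z (dvec d + w) = 0" if "w \<in> W" for w
        using orth[of "dvec d + w"] Jcoeff Anz that by simp
    qed
  qed (use dpos Cfin Fnz in auto)
  show ?thesis
    using coord_sum_eq_half by (auto simp: coord_sum_def N_def)
qed

end
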